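(* Let $k>1$ be an integer and let $x_1<x_2\le x$ be integers. Algorithm 1 (described in the context), run on inputs $k,x_1,x_2$, lists every integer $n$ with $f_k(n)>0$ and $x_1\le n<x_2$; moreover, for every representation of such an $n$ as a sum of $k$th powers of consecutive primes, it also outputs the first (smallest) prime of that representation. The number of arithmetic operations used, including computing the list of primes up to $x^{1/k}$ and the prefix sums, is $$O\!\left(\frac{x^{1/k}}{\log\log x}+\big(s_k(x_2)-s_k(x_1)\big)\right).$$
   Context: $p_n$ denotes the $n$th prime, with $p_1=2$; $\pi(t)$ is the number of primes $\le t$. A positive integer $n$ is $k$-gleeful if $n=p_i^k+\cdots+p_j^k$ for some $1\le i\le j$; $f_k(n)$ is the number of such representations and $s_k(y)=\sum_{1\le n\le y}f_k(n)$. Algorithm 1: as preprocessing, compute all primes up to $x^{1/k}$ (e.g. with the Atkin–Bernstein sieve) and the prefix array $r[0]=0$, $r[j]=r[j-1]+p_j^k$. Then set $t_s\leftarrow1$, $\ell\leftarrow\pi(x_2^{1/k})$; for $b=0,1,\dots,\ell$: while $t_s\le\ell$ and $t_s\le b$, increment $t_s$; while $t_s\le\ell$ and $r[t_s]-r[b]<x_1$, increment $t_s$; then for $t=t_s,\dots,\ell$: let $n=r[t]-r[b]$; if $x_1\le n<x_2$ output $(n,p_{b+1})$ (the representation $n=p_{b+1}^k+\cdots+p_t^k$); else if $n\ge x_2$ exit this inner loop over $t$. *)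

theory Defs
  imports Complex_Main "HOL-Computational_Algebra.Primes"
          "HOL-Library.Infinite_Set" "HOL-Library.Landau_Symbols"
begin

text \<open>p_n, the n-th prime, 1-indexed: p_1 = 2.  (pr 0 is a junk value.)\<close>
definition pr :: "nat \<Rightarrow> nat" where
  "pr n = Infinite_Set.enumerate {q::nat. prime q} (n - 1)"

definition prime_pi :: "real \<Rightarrow> nat" where
  "prime_pi t = card {q::nat. prime q \<and> real q \<le> t}"

definition reps :: "nat \<Rightarrow> int \<Rightarrow> (nat \<times> nat) set" where
  "reps k n = {(i, j). 1 \<le> i \<and> i \<le> j \<and> n = (\<Sum>m = i..j. int (pr m) ^ k)}"

definition gleeful :: "nat \<Rightarrow> int \<Rightarrow> bool" where
  "gleeful k n \<longleftrightarrow> n \<ge> 1 \<and> reps k n \<noteq> {}"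

definition f_rep :: "nat \<Rightarrow> int \<Rightarrow> nat" where
  "f_rep k n = card (reps k n)"

definition s_rep :: "nat \<Rightarrow> int \<Rightarrow> int" where
  "s_rep k y = (\<Sum>n\<in>{1..y}. int (f_rep k n))"

definition rr :: "nat \<Rightarrow> nat \<Rightarrow> int" where
  "rr k j = (\<Sum>m = 1..j. int (pr m) ^ k)"

text \<open>Each function returns (result, number of unit-cost steps).  Every loop test
  (including the final failing test) is charged one step; each loop body consists of
  O(1) arithmetic operations, so this count equals the number of arithmetic operations
  up to a constant factor.\<close>

function adv1 :: "nat \<Rightarrow> nat \<Rightarrow> nat \<Rightarrow> nat \<times> nat" where
  "adv1 l b ts =
     (if ts \<le> l \<and> ts \<le> b
      then (fst (adv1 l b (Suc ts)), Suc (snd (adv1 l b (Suc ts))))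
      else (ts, 1))"
  by pat_completeness auto
termination by (relation "Wellfounded.measure (\<lambda>(l, b, ts). Suc l - ts)") auto

function adv2 :: "nat \<Rightarrow> int \<Rightarrow> nat \<Rightarrow> nat \<Rightarrow> nat \<Rightarrow> nat \<times> nat" where
  "adv2 k x1 l b ts =
     (if ts \<le> l \<and> rr k ts - rr k b < x1
      then (fst (adv2 k x1 l b (Suc ts)), Suc (snd (adv2 k x1 l b (Suc ts))))
      else (ts, 1))"
  by pat_completeness auto
termination by (relation "Wellfounded.measure (\<lambda>(k, x1, l, b, ts). Suc l - ts)") auto

function inner :: "nat \<Rightarrow> int \<Rightarrow> int \<Rightarrow> nat \<Rightarrow> nat \<Rightarrow> nat \<Rightarrow> (int \<times> nat) list \<times> nat" where
  "inner k x1 x2 l b t =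
     (if l < t then ([], 1)
      else (let n = rr k t - rr k b in
            if x1 \<le> n \<and> n < x2
            then ((n, pr (Suc b)) # fst (inner k x1 x2 l b (Suc t)),
                  Suc (snd (inner k x1 x2 l b (Suc t))))
            else if x2 \<le> n then ([], 1)
            else (fst (inner k x1 x2 l b (Suc t)), Suc (snd (inner k x1 x2 l b (Suc t))))))"
  by pat_completeness auto
termination by (relation "Wellfounded.measure (\<lambda>(k, x1, x2, l, b, t). Suc l - t)") auto

function outer :: "nat \<Rightarrow> int \<Rightarrow> int \<Rightarrow> nat \<Rightarrow> nat \<Rightarrow> nat \<Rightarrow> (int \<times> nat) list \<times> nat" where
  "outer k x1 x2 l b ts =
     (if l < b then ([], 1)
      else (let a1 = adv1 l b ts;
                a2 = adv2 k x1 l b (fst a1);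
                i = inner k x1 x2 l b (fst a2);
                rest = outer k x1 x2 l (Suc b) (fst a2)
            in (fst i @ fst rest, Suc (snd a1 + snd a2 + snd i + snd rest))))"
  by pat_completeness auto
termination by (relation "Wellfounded.measure (\<lambda>(k, x1, x2, l, b, ts). Suc l - b)") auto

definition algo1 :: "nat \<Rightarrow> int \<Rightarrow> int \<Rightarrow> (int \<times> nat) list \<times> nat" where
  "algo1 k x1 x2 = outer k x1 x2 (prime_pi (root k (real_of_int x2))) 0 1"

text \<open>Total cost, including preprocessing: a prime sieve up to N = floor(x^(1/k)) whose
  cost is given by the parameter sc (e.g. the Atkin--Bernstein sieve), and the
  computation of the prefix array r[1..pi(x^(1/k))], each entry costing k arithmetic
  operations (k - 1 multiplications for p^k and one addition).\<close>
definition total_cost :: "(nat \<Rightarrow> nat) \<Rightarrow> nat \<Rightarrow> int \<Rightarrow> int \<Rightarrow> int \<Rightarrow> nat" where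
  "total_cost sc k x x1 x2 =
     sc (nat \<lfloor>root k (real_of_int x)\<rfloor>) + k * prime_pi (root k (real_of_int x))
     + snd (algo1 k x1 x2)"

end

theory Submission
  imports Defs
begin

text \<open>
  Since the prefix sums r are strictly increasing, for a fixed start b the inner loop visits exactly
  the block ends t with r[t] - r[b] in [x1, x2), plus one failing test.  A block end skipped for b
  (because r[t] - r[b] < x1) is also skipped for b + 1, so carrying t_s over from one b to the next
  loses nothing, and t_s advances at most \<ell> + 1 times in total.  Hence the main loop uses
  O(\<ell> + #outputs) steps.  The outputs are the representations with value in [x1, x2); those with
  value x1 number at most \<ell> (one per start), the others at most s_k(x2) - s_k(x1).  Finally
  \<ell> \<le> \<pi>(x^(1/k)) = O(x^(1/k) / log x) by Chebyshev's bound \<pi>(y) \<le> 6 y / log y, which follows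
  from \<Prod>(p \<le> n) p \<le> 4^n, and the sieve up to N = \<lfloor>x^(1/k)\<rfloor> costs O(N / log log N), where
  log log N \<ge> (log log x) / 2 for large x.
\<close>

lemma strict_mono_on_pr: "strict_mono_on {1..} pr"
  unfolding pr_def using primes_infinite
  by (intro strict_mono_onI enumerate_mono) auto

lemma pr_prime: "prime (pr n)"
  unfolding pr_def using enumerate_in_set primes_infinite by blast

lemma finite_primes_le: "finite {q::nat. prime q \<and> real q \<le> t}"
  by (rule finite_subset[of _ "{..nat \<lfloor>t\<rfloor>}"]) (auto simp: le_nat_floor)

lemma prime_pi_mono: "mono prime_pi"
  unfolding prime_pi_def by (intro monoI card_mono[OF finite_primes_le]) auto

lemma prime_pi_le_self: "0 \<le> t \<Longrightarrow> real (prime_pi t) \<le> t"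
proof -
  assume "0 \<le> t"
  have "{q::nat. prime q \<and> real q \<le> t} \<subseteq> {1..nat \<lfloor>t\<rfloor>}"
    by (auto simp: le_nat_floor dest: prime_gt_0_nat)
  then have "prime_pi t \<le> nat \<lfloor>t\<rfloor>"
    unfolding prime_pi_def by (metis card_atLeastAtMost card_mono diff_Suc_1 finite_atLeastAtMost)
  then show ?thesis using \<open>0 \<le> t\<close> by linarith
qed

lemma prime_pi_ge_1: "2 \<le> t \<Longrightarrow> 1 \<le> prime_pi t"
  unfolding prime_pi_def
  using card_mono[OF finite_primes_le, of "{2}" t] by (simp add: subset_eq)

lemma index_le_prime_pi:
  assumes "1 \<le> j" "real (pr j) \<le> t"
  shows "j \<le> prime_pi t"
proof -
  have "inj_on pr {1..j}"
    by (rule inj_on_subset[OF strict_mono_on_imp_inj_on[OF strict_mono_on_pr]]) auto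
  moreover have "pr ` {1..j} \<subseteq> {q. prime q \<and> real q \<le> t}"
  proof safe
    fix i assume "i \<in> {1..j}"
    then have "pr i \<le> pr j" by (auto intro: strict_mono_on_leD[OF strict_mono_on_pr])
    then show "real (pr i) \<le> t" using assms(2) by linarith
  qed (rule pr_prime)
  ultimately have "card {1..j} \<le> prime_pi t"
    unfolding prime_pi_def by (rule card_inj_on_le[OF _ _ finite_primes_le])
  then show ?thesis by simp
qed

section \<open>Chebyshev's upper bound for \<pi>\<close>

lemma binomial_odd_central_le: "(2*m+1) choose m \<le> 4^m"
proof -
  have "((2*m+1) choose m) + ((2*m+1) choose (Suc m)) \<le> (\<Sum>i\<le>2*m+1. (2*m+1) choose i)"
    using sum_mono2[of "{..2*m+1}" "{m, Suc m}" "\<lambda>i. (2*m+1) choose i"] by simp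
  also have "\<dots> = 2 * 4^m"
    by (simp only: choose_row_sum) (simp add: power_mult)
  finally show ?thesis
    using binomial_symmetric[of "Suc m" "2*m+1"] by simp
qed

lemma prod_primes_dvd:
  fixes c :: nat
  assumes "finite A" "\<And>p. p \<in> A \<Longrightarrow> prime p \<and> p dvd c"
  shows "\<Prod>A dvd c"
  using assms
proof (induction A rule: finite_induct)
  case (insert p A)
  then have "coprime p (\<Prod>A)"
    by (intro prod_coprime_right) (auto intro: primes_coprime)
  with insert show ?case by (simp add: divides_mult)
qed simp

lemma prod_primes_between_le: "\<Prod>{p::nat. prime p \<and> m+1 < p \<and> p \<le> 2*m+1} \<le> 4^m"
proof -
  let ?B = "{p::nat. prime p \<and> m+1 < p \<and> p \<le> 2*m+1}"
  have "\<Prod>?B dvd (2*m+1) choose m"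
  proof (rule prod_primes_dvd)
    show "finite ?B" by (rule finite_subset[of _ "{..2*m+1}"]) auto
    fix p assume p: "p \<in> ?B"
    then have "prime p" by simp
    have "p dvd fact (2*m+1)" using p by (intro dvd_fact) (auto dest: prime_gt_0_nat)
    also have "fact (2*m+1) = fact m * fact (m+1) * ((2*m+1) choose m)"
      using binomial_fact_lemma[of m "2*m+1"] by (simp add: mult_ac)
    finally have "p dvd fact m * fact (m+1) * ((2*m+1) choose m)" .
    then show "prime p \<and> p dvd (2*m+1) choose m"
      using p by (simp only: prime_dvd_mult_iff[OF \<open>prime p\<close>] prime_dvd_fact_iff[OF \<open>prime p\<close>]) auto
  qed
  then have "\<Prod>?B \<le> (2*m+1) choose m" by (rule dvd_imp_le) simp
  then show ?thesis using binomial_odd_central_le order_trans by blast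
qed

lemma primorial_le_four_pow: "\<Prod>{p::nat. prime p \<and> p \<le> n} \<le> 4^n"
proof (induction n rule: less_induct)
  case (less n)
  have "n \<le> 2 \<or> (even n \<and> 2 < n) \<or> (\<exists>m. n = 2*m+1 \<and> 1 \<le> m)" by presburger
  then consider "n \<le> 2" | "even n" "2 < n" | m where "n = 2*m+1" "1 \<le> m" by blast
  then show ?case
  proof cases
    case 1
    then have "{p::nat. prime p \<and> p \<le> n} = (if n = 2 then {2} else {})"
      by (auto dest: prime_ge_2_nat)
    then show ?thesis by simp
  next
    case 2
    then have "\<not> prime n" using prime_odd_nat by blast
    then have "{p::nat. prime p \<and> p \<le> n} = {p. prime p \<and> p \<le> n - 1}"
      using le_eq_less_or_eq by fastforce
    then have "\<Prod>{p::nat. prime p \<and> p \<le> n} = \<Prod>{p. prime p \<and> p \<le> n - 1}" by simp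
    also have "\<dots> \<le> 4^(n - 1)" using less[of "n - 1"] 2 by simp
    also have "\<dots> \<le> 4^n" by (rule power_increasing) auto
    finally show ?thesis .
  next
    case 3
    have split: "{p::nat. prime p \<and> p \<le> n}
        = {p. prime p \<and> p \<le> m+1} \<union> {p. prime p \<and> m+1 < p \<and> p \<le> 2*m+1}"
      using 3 by auto
    have "\<Prod>{p::nat. prime p \<and> p \<le> n}
        = \<Prod>{p. prime p \<and> p \<le> m+1} * \<Prod>{p. prime p \<and> m+1 < p \<and> p \<le> 2*m+1}"
      unfolding split
      by (rule prod.union_disjoint) (auto intro: finite_subset[of _ "{..2*m+1}"])
    also have "\<dots> \<le> 4^(m+1) * 4^m"
      using less[of "m+1"] 3 by (intro mult_le_mono prod_primes_between_le) auto
    also have "\<dots> = 4^n"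
      using 3 by (simp add: power_add[symmetric])
    finally show ?thesis .
  qed
qed

lemma card_primes_above_sqrt:
  assumes "1 < y"
  shows "real (card {q::nat. prime q \<and> sqrt y < q \<and> real q \<le> y}) * ln y \<le> 4 * y"
proof -
  define S where "S = {q::nat. prime q \<and> sqrt y < q \<and> real q \<le> y}"
  define N where "N = nat \<lfloor>y\<rfloor>"
  have "q \<le> N \<longleftrightarrow> real q \<le> y" for q
    unfolding N_def using assms by (simp add: le_nat_iff le_floor_iff)
  then have primes_N: "{q. prime q \<and> real q \<le> y} = {p. prime p \<and> p \<le> N}" by simp
  have "\<Prod>S \<le> \<Prod>{p. prime p \<and> p \<le> N}"
  proof (rule dvd_imp_le)
    show "\<Prod>S dvd \<Prod>{p. prime p \<and> p \<le> N}"
      unfolding primes_N[symmetric] by (rule prod_dvd_prod_subset[OF finite_primes_le]) (auto simp: S_def)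
    show "0 < \<Prod>{p. prime p \<and> p \<le> N}"
      by (rule prod_pos) (auto dest: prime_gt_0_nat)
  qed
  also have "\<dots> \<le> 4 ^ N" by (rule primorial_le_four_pow)
  finally have prod_S: "real (\<Prod>S) \<le> 4 ^ N" by (metis of_nat_le_iff of_nat_numeral of_nat_power)
  have "sqrt y ^ card S = (\<Prod>q\<in>S. sqrt y)" by simp
  also have "\<dots> \<le> real (\<Prod>S)"
    unfolding of_nat_prod using assms by (intro prod_mono) (auto simp: S_def)
  finally have "sqrt y ^ card S \<le> 4 ^ N" using prod_S by linarith
  then have "ln (sqrt y ^ card S) \<le> ln (4 ^ N)"
    using assms by (intro ln_mono) auto
  then have "real (card S) * (ln y / 2) \<le> real N * ln 4"
    using assms by (simp add: ln_realpow ln_sqrt)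
  moreover have "real N * ln 4 \<le> y * 2"
  proof (rule mult_mono)
    show "real N \<le> y" unfolding N_def using assms by simp
    show "ln (4::real) \<le> 2" using ln_realpow[of 2 2] ln_2_less_1 by simp
  qed (use assms in auto)
  ultimately show ?thesis unfolding S_def by linarith
qed

lemma prime_pi_le:
  assumes "1 < y"
  shows "real (prime_pi y) \<le> 6 * y / ln y"
proof -
  let ?S = "{q::nat. prime q \<and> sqrt y < q \<and> real q \<le> y}"
  have lny: "0 < ln y" using assms by simp
  have "prime_pi y \<le> card ({q. prime q \<and> real q \<le> sqrt y} \<union> ?S)"
    unfolding prime_pi_def
    by (rule card_mono) (auto intro: finite_primes_le finite_subset[OF _ finite_primes_le[of y]])
  also have "\<dots> \<le> prime_pi (sqrt y) + card ?S"
    unfolding prime_pi_def by (rule card_Un_le)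
  finally have "prime_pi y \<le> prime_pi (sqrt y) + card ?S" .
  moreover have "real (prime_pi (sqrt y)) \<le> 2 * y / ln y"
  proof -
    have "ln y \<le> 2 * sqrt y"
      using ln_sqrt[of y] ln_le_minus_one[of "sqrt y"] assms by simp
    then have "sqrt y * ln y \<le> sqrt y * (2 * sqrt y)"
      by (rule mult_left_mono) (use assms in simp)
    also have "\<dots> = 2 * y" using assms by simp
    finally have "sqrt y * ln y \<le> 2 * y" .
    then have "sqrt y \<le> 2 * y / ln y" using lny by (simp add: field_simps)
    then show ?thesis using prime_pi_le_self[of "sqrt y"] assms by simp
  qed
  moreover have "real (card ?S) \<le> 4 * y / ln y"
    using card_primes_above_sqrt[OF assms] lny by (simp add: field_simps)
  moreover have "2 * y / ln y + 4 * y / ln y = 6 * y / ln y"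
    by (simp add: field_simps)
  ultimately show ?thesis by linarith
qed

section \<open>Correctness of Algorithm 1\<close>

declare adv1.simps[simp del] adv2.simps[simp del] inner.simps[simp del] outer.simps[simp del]

lemma strict_mono_rr: "strict_mono (rr k)"
  unfolding strict_mono_Suc_iff rr_def using pr_prime prime_gt_0_nat by simp

lemma rr_diff: "b \<le> t \<Longrightarrow> rr k t - rr k b = (\<Sum>m = Suc b..t. int (pr m) ^ k)"
  by (induction t rule: dec_induct) (simp_all add: rr_def)

lemma count_up_loop:
  fixes g :: "nat \<Rightarrow> nat \<times> nat"
  assumes g: "\<And>t. g t = (if t \<le> l \<and> P t then (fst (g (Suc t)), Suc (snd (g (Suc t)))) else (t, 1))"
  shows "ts \<le> fst (g ts) \<and> fst (g ts) \<le> max ts (Suc l) \<and> snd (g ts) = Suc (fst (g ts) - ts)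
    \<and> (l < fst (g ts) \<or> \<not> P (fst (g ts))) \<and> (\<forall>t\<in>{ts..<fst (g ts)}. P t)"
proof (induction "Suc l - ts" arbitrary: ts)
  case 0
  then show ?case using g[of ts] by simp
next
  case (Suc d)
  show ?case
  proof (cases "ts \<le> l \<and> P ts")
    case True
    let ?r = "fst (g (Suc ts))"
    have IH: "Suc ts \<le> ?r \<and> ?r \<le> max (Suc ts) (Suc l) \<and> snd (g (Suc ts)) = Suc (?r - Suc ts)
      \<and> (l < ?r \<or> \<not> P ?r) \<and> (\<forall>t\<in>{Suc ts..<?r}. P t)"
      using Suc(1)[of "Suc ts"] Suc(2) True by simp
    have "P t" if "t \<in> {ts..<?r}" for t
      using IH True that by (cases "t = ts") auto
    then show ?thesis using IH g[of ts] True by auto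
  next
    case False
    then show ?thesis using g[of ts] by auto
  qed
qed

lemma adv1_loop:
  fixes l b ts :: nat
  defines "a \<equiv> fst (adv1 l b ts)"
  shows "ts \<le> a \<and> a \<le> max ts (Suc l) \<and> snd (adv1 l b ts) = Suc (a - ts)
    \<and> (l < a \<or> b < a) \<and> (\<forall>t\<in>{ts..<a}. t \<le> b)"
  unfolding a_def using count_up_loop[of "adv1 l b" l "\<lambda>t. t \<le> b" ts, OF adv1.simps] by auto

lemma adv2_loop:
  fixes k l b ts :: nat and x1 :: int
  defines "a \<equiv> fst (adv2 k x1 l b ts)"
  shows "ts \<le> a \<and> a \<le> max ts (Suc l) \<and> snd (adv2 k x1 l b ts) = Suc (a - ts)
    \<and> (l < a \<or> x1 \<le> rr k a - rr k b) \<and> (\<forall>t\<in>{ts..<a}. rr k t - rr k b < x1)"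
  unfolding a_def
  using count_up_loop[of "adv2 k x1 l b" l "\<lambda>t. rr k t - rr k b < x1" ts, OF adv2.simps] by auto

definition hits :: "nat \<Rightarrow> int \<Rightarrow> int \<Rightarrow> nat \<Rightarrow> nat \<Rightarrow> nat \<Rightarrow> (int \<times> nat) list" where
  "hits k x1 x2 l b t =
     map (\<lambda>t'. (rr k t' - rr k b, pr (Suc b)))
       (filter (\<lambda>t'. x1 \<le> rr k t' - rr k b \<and> rr k t' - rr k b < x2) [t..<Suc l])"

lemma hits_above: "l < t \<Longrightarrow> hits k x1 x2 l b t = []"
  by (simp add: hits_def)

lemma hits_Cons:
  assumes "t \<le> l"
  shows "hits k x1 x2 l b t =
     (if x1 \<le> rr k t - rr k b \<and> rr k t - rr k b < x2 then [(rr k t - rr k b, pr (Suc b))] else [])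
     @ hits k x1 x2 l b (Suc t)"
proof -
  have "[t..<Suc l] = t # [Suc t..<Suc l]" using assms by (simp add: upt_conv_Cons)
  then show ?thesis unfolding hits_def by simp
qed

lemma hits_stop:
  assumes "x2 \<le> rr k t - rr k b"
  shows "hits k x1 x2 l b t = []"
proof -
  have "rr k t \<le> rr k t'" if "t \<le> t'" for t'
    using that strict_mono_less_eq[OF strict_mono_rr] by blast
  with assms show ?thesis by (fastforce simp: hits_def filter_empty_conv)
qed

lemma hits_skip:
  assumes "t \<le> t0" "\<And>t'. t \<le> t' \<Longrightarrow> t' < t0 \<Longrightarrow> rr k t' - rr k b < x1"
  shows "hits k x1 x2 l b t = hits k x1 x2 l b t0"
  using assms
proof (induction t0 rule: dec_induct)
  case (step t0)
  have "hits k x1 x2 l b t0 = hits k x1 x2 l b (Suc t0)"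
    using step.prems[of t0] step.hyps by (cases "t0 \<le> l") (auto simp: hits_Cons hits_above)
  with step show ?case by simp
qed simp

lemma inner_eq_hits: "fst (inner k x1 x2 l b t) = hits k x1 x2 l b t"
proof (induction "Suc l - t" arbitrary: t)
  case 0
  then show ?case by (subst inner.simps) (simp add: hits_above)
next
  case (Suc d)
  then have t: "t \<le> l" and IH: "fst (inner k x1 x2 l b (Suc t)) = hits k x1 x2 l b (Suc t)"
    by simp_all
  show ?case
  proof (cases "x2 \<le> rr k t - rr k b")
    case True
    with t show ?thesis by (subst inner.simps) (simp add: hits_stop)
  next
    case False
    with t IH show ?thesis by (subst inner.simps) (auto simp: Let_def hits_Cons[of t])
  qed
qed

lemma outer_eq_hits:
  assumes "\<forall>t\<in>{Suc b..<ts}. rr k t - rr k b < x1"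
  shows "fst (outer k x1 x2 l b ts) = concat (map (\<lambda>b'. hits k x1 x2 l b' (Suc b')) [b..<Suc l])"
  using assms
proof (induction "Suc l - b" arbitrary: b ts)
  case 0
  then show ?case by (subst outer.simps) simp
next
  case (Suc d)
  then have b: "b \<le> l" by simp
  define a1 where "a1 = fst (adv1 l b ts)"
  define a2 where "a2 = fst (adv2 k x1 l b a1)"
  have a1: "ts \<le> a1" "l < a1 \<or> b < a1" "\<forall>t\<in>{ts..<a1}. t \<le> b"
    using adv1_loop[of ts l b] unfolding a1_def by auto
  have a2: "a1 \<le> a2" "\<forall>t\<in>{a1..<a2}. rr k t - rr k b < x1"
    using adv2_loop[of a1 k x1 l b] unfolding a2_def by auto
  have skipped: "rr k t - rr k b < x1" if "Suc b \<le> t" "t < a2" for t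
  proof (cases "t < a1")
    case True
    then have "t < ts" using a1(3) that(1) by (meson atLeastLessThan_iff not_less_eq_eq not_le)
    then show ?thesis using Suc.prems that(1) by simp
  next
    case False
    then show ?thesis using a2 that(2) by simp
  qed
  have "hits k x1 x2 l b a2 = hits k x1 x2 l b (Suc b)"
    using a1 a2 b skipped by (intro hits_skip[symmetric]) auto
  moreover have "\<forall>t\<in>{Suc (Suc b)..<a2}. rr k t - rr k (Suc b) < x1"
  proof
    fix t assume "t \<in> {Suc (Suc b)..<a2}"
    moreover have "rr k b < rr k (Suc b)" by (rule strict_monoD[OF strict_mono_rr]) simp
    ultimately show "rr k t - rr k (Suc b) < x1" using skipped[of t] by simp
  qed
  then have "fst (outer k x1 x2 l (Suc b) a2) =
      concat (map (\<lambda>b'. hits k x1 x2 l b' (Suc b')) [Suc b..<Suc l])"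
    using Suc.hyps by simp
  moreover have "[b..<Suc l] = b # [Suc b..<Suc l]" using b by (rule upt_conv_Cons[OF le_imp_less_Suc])
  ultimately show ?case
    using b by (subst outer.simps) (simp add: Let_def inner_eq_hits a1_def a2_def del: upt_Suc)
qed

lemma set_hits:
  "set (hits k x1 x2 l b t) = {(rr k t' - rr k b, pr (Suc b)) | t'.
     t \<le> t' \<and> t' \<le> l \<and> x1 \<le> rr k t' - rr k b \<and> rr k t' - rr k b < x2}"
  by (auto simp: hits_def)

lemma distinct_hits: "distinct (hits k x1 x2 l b t)"
  unfolding hits_def by (simp add: distinct_map inj_on_def strict_mono_eq[OF strict_mono_rr])

lemma distinct_concat_hits: "distinct (concat (map (\<lambda>b. hits k x1 x2 l b (Suc b)) [0..<n]))"
proof (induction n)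
  case (Suc n)
  have "snd p < pr (Suc n)" if "p \<in> set (concat (map (\<lambda>b. hits k x1 x2 l b (Suc b)) [0..<n]))" for p
    using that strict_mono_onD[OF strict_mono_on_pr] by (auto simp: set_hits)
  with Suc show ?case by (fastforce simp: distinct_hits set_hits)
qed simp

lemma algo1_eq_hits:
  "fst (algo1 k x1 x2) =
     concat (map (\<lambda>b. hits k x1 x2 (prime_pi (root k x2)) b (Suc b)) [0..<Suc (prime_pi (root k x2))])"
  unfolding algo1_def by (rule outer_eq_hits) simp

lemma algo1_distinct: "distinct (fst (algo1 k x1 x2))"
  unfolding algo1_eq_hits by (rule distinct_concat_hits)

lemma reps_iff_rr: "(i, j) \<in> reps k n \<longleftrightarrow> 1 \<le> i \<and> i \<le> j \<and> n = rr k j - rr k (i - 1)"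
  unfolding reps_def using rr_diff[of "i - 1" j k] by auto

lemma reps_last_le_prime_pi:
  assumes "0 < k" "(i, j) \<in> reps k n" "n < x2"
  shows "j \<le> prime_pi (root k (real_of_int x2))"
proof (rule index_le_prime_pi)
  from assms(2) have ij: "1 \<le> i" "i \<le> j" "n = (\<Sum>m = i..j. int (pr m) ^ k)"
    unfolding reps_def by auto
  then have "int (pr j) ^ k \<le> n" by (auto intro: member_le_sum)
  with assms(3) have "real (pr j) ^ k \<le> real_of_int x2"
    by (metis of_int_le_iff of_int_of_nat_eq of_int_power less_imp_le order_le_less_trans)
  then show "real (pr j) \<le> root k (real_of_int x2)"
    using assms(1) real_root_le_mono[of k "real (pr j) ^ k"] by (simp add: real_root_power_cancel)
  show "1 \<le> j" using ij by simp
qed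

lemma algo1_set:
  assumes "0 < k"
  shows "set (fst (algo1 k x1 x2)) =
    {(n, q). x1 \<le> n \<and> n < x2 \<and> (\<exists>i j. (i, j) \<in> reps k n \<and> q = pr i)}"
    (is "_ = ?T")
proof -
  define l where "l = prime_pi (root k (real_of_int x2))"
  have "set (fst (algo1 k x1 x2)) = (\<Union>b\<le>l. set (hits k x1 x2 l b (Suc b)))"
    unfolding algo1_eq_hits l_def[symmetric] set_concat set_map set_upt
    by (simp add: atLeast0LessThan lessThan_Suc_atMost)
  also have "\<dots> = ?T"
  proof (intro set_eqI iffI)
    fix p assume "p \<in> (\<Union>b\<le>l. set (hits k x1 x2 l b (Suc b)))"
    then obtain b t where bt: "p = (rr k t - rr k b, pr (Suc b))" "b < t"
      "x1 \<le> rr k t - rr k b" "rr k t - rr k b < x2"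
      unfolding set_hits by (auto simp: Suc_le_eq)
    then have "(Suc b, t) \<in> reps k (rr k t - rr k b)" by (simp add: reps_iff_rr)
    with bt show "p \<in> ?T" by blast
  next
    fix p assume "p \<in> ?T"
    then obtain n i j where p: "p = (n, pr i)" "x1 \<le> n" "n < x2" "(i, j) \<in> reps k n" by blast
    then have "j \<le> l" unfolding l_def using assms reps_last_le_prime_pi by blast
    from p have ij: "1 \<le> i" "i \<le> j" "n = rr k j - rr k (i - 1)" by (simp_all add: reps_iff_rr)
    have "p \<in> set (hits k x1 x2 l (i - 1) (Suc (i - 1)))"
      unfolding set_hits using p ij \<open>j \<le> l\<close> by (intro CollectI exI[of _ j]) auto
    moreover have "i - 1 \<in> {..l}" using ij \<open>j \<le> l\<close> by simp
    ultimately show "p \<in> (\<Union>b\<le>l. set (hits k x1 x2 l b (Suc b)))" by blast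
  qed
  finally show ?thesis .
qed

section \<open>Counting operations\<close>

lemma inner_steps:
  "l < t \<or> x1 \<le> rr k t - rr k b \<Longrightarrow>
   snd (inner k x1 x2 l b t) = Suc (length (fst (inner k x1 x2 l b t)))"
proof (induction "Suc l - t" arbitrary: t)
  case 0
  then show ?case by (subst (1 2) inner.simps) simp
next
  case (Suc d)
  have "x1 \<le> rr k (Suc t) - rr k b" if "x1 \<le> rr k t - rr k b"
    using that strict_monoD[OF strict_mono_rr, of t "Suc t" k] by simp
  with Suc show ?case
    by (subst (1 2) inner.simps) (auto simp: Let_def)
qed

text \<open>The summand ts on the left is a potential: the steps of the two advancing loops telescope
  to the total advance of t_s, which never exceeds Suc l.\<close>

lemma outer_steps:
  "ts \<le> Suc l \<Longrightarrow> snd (outer k x1 x2 l b ts) + ts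
     \<le> length (fst (outer k x1 x2 l b ts)) + 4 * (Suc l - b) + Suc (Suc l)"
proof (induction "Suc l - b" arbitrary: b ts)
  case 0
  then show ?case by (subst (1 2) outer.simps) simp
next
  case (Suc d)
  then have b: "b \<le> l" by simp
  define a1 where "a1 = fst (adv1 l b ts)"
  define a2 where "a2 = fst (adv2 k x1 l b a1)"
  have a1: "ts \<le> a1" "a1 \<le> Suc l" "snd (adv1 l b ts) = Suc (a1 - ts)"
    using adv1_loop[of ts l b] Suc.prems unfolding a1_def by auto
  have a2: "a1 \<le> a2" "a2 \<le> Suc l" "snd (adv2 k x1 l b a1) = Suc (a2 - a1)"
    "l < a2 \<or> x1 \<le> rr k a2 - rr k b"
    using adv2_loop[of a1 k x1 l b] a1(2) unfolding a2_def by auto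
  have "snd (outer k x1 x2 l (Suc b) a2) + a2
      \<le> length (fst (outer k x1 x2 l (Suc b) a2)) + 4 * (Suc l - Suc b) + Suc (Suc l)"
    using Suc.hyps(1)[of "Suc b" a2] Suc.hyps(2) a2(2) by simp
  then show ?case
    using b a1 a2 inner_steps[where t = a2]
    by (subst (1 2) outer.simps) (simp add: Let_def a1_def[symmetric] a2_def[symmetric])
qed

lemma reps_pos:
  assumes "(i, j) \<in> reps k n"
  shows "0 < n"
proof -
  from assms have "i - 1 < j" "n = rr k j - rr k (i - 1)" by (auto simp: reps_iff_rr)
  then show ?thesis using strict_monoD[OF strict_mono_rr, of "i - 1" j k] by simp
qed

lemma f_rep_nonpos: "n \<le> 0 \<Longrightarrow> f_rep k n = 0"
proof -
  assume "n \<le> 0"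
  then have "reps k n = {}" using reps_pos by fastforce
  then show ?thesis by (simp add: f_rep_def)
qed

lemma finite_reps:
  assumes "0 < k"
  shows "finite (reps k n)"
proof (rule finite_subset)
  define L where "L = prime_pi (root k (real_of_int (n + 1)))"
  show "reps k n \<subseteq> {1..L} \<times> {1..L}"
  proof safe
    fix i j assume ij: "(i, j) \<in> reps k n"
    then have "j \<le> L" unfolding L_def using assms by (intro reps_last_le_prime_pi) auto
    with ij show "i \<in> {1..L}" "j \<in> {1..L}" by (auto simp: reps_def)
  qed
qed simp

lemma s_rep_diff:
  assumes "x1 \<le> x2"
  shows "s_rep k x2 - s_rep k x1 = (\<Sum>n\<in>{x1<..x2}. int (f_rep k n))"
proof -
  define a where "a = min 0 x1"
  have s_rep_from_a: "s_rep k y = (\<Sum>n\<in>{a<..y}. int (f_rep k n))" for y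
    unfolding s_rep_def a_def
    by (rule sum.mono_neutral_right[symmetric]) (auto simp: f_rep_nonpos)
  have "{a<..x2} = {a<..x1} \<union> {x1<..x2}" using assms by (auto simp: a_def)
  then have "s_rep k x2 = s_rep k x1 + (\<Sum>n\<in>{x1<..x2}. int (f_rep k n))"
    unfolding s_rep_from_a by (simp add: sum.union_disjoint)
  then show ?thesis by simp
qed

lemma length_algo1_le:
  assumes "0 < k" "x1 < x2"
  shows "int (length (fst (algo1 k x1 x2)))
    \<le> int (prime_pi (root k (real_of_int x2))) + (s_rep k x2 - s_rep k x1)"
proof -
  define l where "l = prime_pi (root k (real_of_int x2))"
  define R where "R = (SIGMA n:{x1<..<x2}. reps k n)"
  have finite_R: "finite R" unfolding R_def using finite_reps assms(1) by auto
  \<comment> \<open>outputs with n = x1 are not counted by s_k(x2) - s_k(x1), but there is at most one per start\<close>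
  have "set (fst (algo1 k x1 x2)) \<subseteq> (\<lambda>i. (x1, pr i)) ` {1..l} \<union> (\<lambda>(n, i, j). (n, pr i)) ` R"
  proof
    fix p assume "p \<in> set (fst (algo1 k x1 x2))"
    then obtain n i j where p: "p = (n, pr i)" "x1 \<le> n" "n < x2" "(i, j) \<in> reps k n"
      unfolding algo1_set[OF assms(1)] by blast
    show "p \<in> (\<lambda>i. (x1, pr i)) ` {1..l} \<union> (\<lambda>(n, i, j). (n, pr i)) ` R"
    proof (cases "n = x1")
      case True
      have "i \<le> l" using reps_last_le_prime_pi[OF assms(1) p(4) p(3)] p(4)
        unfolding l_def reps_def by simp
      with True p show ?thesis unfolding reps_def by auto
    next
      case False
      with p have "(n, i, j) \<in> R" unfolding R_def by auto
      then show ?thesis using p by force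
    qed
  qed
  then have "length (fst (algo1 k x1 x2))
      \<le> card ((\<lambda>i. (x1, pr i)) ` {1..l} \<union> (\<lambda>(n, i, j). (n, pr i)) ` R)"
    using finite_R by (simp add: distinct_card[OF algo1_distinct, symmetric] card_mono)
  also have "\<dots> \<le> card ((\<lambda>i. (x1, pr i)) ` {1..l}) + card ((\<lambda>(n, i, j). (n, pr i)) ` R)"
    by (rule card_Un_le)
  also have "\<dots> \<le> l + card R"
    using card_image_le[OF finite_R, of "\<lambda>(n, i, j). (n, pr i)"]
      card_image_le[of "{1..l}" "\<lambda>i. (x1, pr i)"] by simp
  also have "card R = (\<Sum>n\<in>{x1<..<x2}. f_rep k n)"
    unfolding R_def f_rep_def using finite_reps assms(1) by (simp add: card_SigmaI)
  finally have "int (length (fst (algo1 k x1 x2))) \<le> int l + (\<Sum>n\<in>{x1<..<x2}. int (f_rep k n))"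
    by (simp only: of_nat_sum[symmetric] of_nat_add[symmetric] of_nat_le_iff)
  also have "(\<Sum>n\<in>{x1<..<x2}. int (f_rep k n)) \<le> s_rep k x2 - s_rep k x1"
    unfolding s_rep_diff[OF less_imp_le[OF assms(2)]] by (rule sum_mono2) auto
  finally show ?thesis unfolding l_def by simp
qed

lemma algo1_steps:
  "snd (algo1 k x1 x2) \<le> length (fst (algo1 k x1 x2)) + 5 * prime_pi (root k (real_of_int x2)) + 5"
  using outer_steps[of 1 "prime_pi (root k (real_of_int x2))" k x1 x2 0] unfolding algo1_def by simp

lemma total_cost_le:
  assumes "0 < k" "x1 < x2" "x2 \<le> x"
  shows "real (total_cost sc k x x1 x2) \<le> real (sc (nat \<lfloor>root k (real_of_int x)\<rfloor>))
     + (real k + 6) * real (prime_pi (root k (real_of_int x))) + 5 + real_of_int (s_rep k x2 - s_rep k x1)"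
proof -
  have "prime_pi (root k (real_of_int x2)) \<le> prime_pi (root k (real_of_int x))"
    using assms by (intro monoD[OF prime_pi_mono] real_root_le_mono) auto
  then show ?thesis
    using algo1_steps[of k x1 x2] length_algo1_le[OF assms(1,2)]
    unfolding total_cost_def by (simp add: algebra_simps)
qed

section \<open>Asymptotics\<close>

lemma two_le_root:
  assumes "0 < k" "exp (4 * real k ^ 2) \<le> X"
  shows "2 \<le> root k X"
proof -
  have "(2::real) ^ k \<le> exp 1 ^ k"
    using exp_ge_add_one_self[of 1] by (intro power_mono) auto
  also have "\<dots> = exp (real k)" by (simp add: exp_of_nat_mult[symmetric])
  also have "\<dots> \<le> exp (4 * real k ^ 2)"
    using assms(1) by (simp add: power2_eq_square)
  also have "\<dots> \<le> X" by fact
  finally show ?thesis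
    using assms(1) real_root_le_mono[of k "2 ^ k" X] by (simp add: real_root_power_cancel)
qed

lemma ln_bounds_of_exp_le:
  assumes "0 < k" "exp (4 * real k ^ 2) \<le> X"
  shows "0 < X" "4 * real k ^ 2 \<le> ln X" "1 < ln X"
proof -
  show "0 < X" using assms(2) by (meson exp_gt_zero less_le_trans)
  then show lnX: "4 * real k ^ 2 \<le> ln X" using assms(2) by (simp add: ln_ge_iff)
  have "1 \<le> real k ^ 2" using assms(1) by simp
  with lnX show "1 < ln X" by simp
qed

lemma prime_pi_root_le:
  assumes "0 < k" "exp (4 * real k ^ 2) \<le> X"
  shows "real (prime_pi (root k X)) \<le> 6 * real k * (root k X / ln (ln X))"
proof -
  have lnX: "1 < ln X" using ln_bounds_of_exp_le[OF assms] by simp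
  have "real (prime_pi (root k X)) \<le> 6 * root k X / ln (root k X)"
    using two_le_root[OF assms] by (intro prime_pi_le) simp
  also have "\<dots> = 6 * real k * (root k X / ln X)"
    using assms(1) by (simp add: ln_root)
  also have "\<dots> \<le> 6 * real k * (root k X / ln (ln X))"
    using lnX two_le_root[OF assms] ln_bound[of "ln X"]
    by (intro mult_left_mono divide_left_mono) (auto simp: ln_gt_zero_iff)
  finally show ?thesis .
qed

lemma ln_ln_floor_root_ge:
  assumes "0 < k" "exp (4 * real k ^ 2) \<le> X"
  shows "ln (ln X) / 2 \<le> ln (ln (real (nat \<lfloor>root k X\<rfloor>)))"
proof -
  define u where "u = ln X"
  have X: "0 < X" and u: "4 * real k ^ 2 \<le> u"
    using ln_bounds_of_exp_le[OF assms] by (auto simp: u_def)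
  have u0: "0 \<le> u" using u zero_le_power2[of "real k"] by linarith
  have sqrt_u: "2 * real k \<le> sqrt u"
    using u by (intro real_le_rsqrt) (simp add: power_mult_distrib)
  have k1: "1 \<le> real k" using assms(1) by simp
  \<comment> \<open>ln N \<ge> ln (root k X / 2) = u / k - ln 2 \<ge> sqrt u, because sqrt u \<ge> 2 k\<close>
  have "sqrt u * (2 * real k) \<le> sqrt u * sqrt u"
    using sqrt_u u0 by (intro mult_left_mono) auto
  also have "\<dots> = u" using u0 by simp
  finally have "2 * sqrt u \<le> u / real k"
    using k1 by (simp add: field_simps)
  then have "sqrt u \<le> u / real k - ln 2"
    using sqrt_u k1 ln_2_less_1 by linarith
  also have "\<dots> = ln (root k X / 2)"
    using assms(1) X two_le_root[OF assms] by (simp add: ln_div ln_root u_def)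
  also have "\<dots> \<le> ln (real (nat \<lfloor>root k X\<rfloor>))"
    using two_le_root[OF assms] by (intro ln_mono) linarith+
  finally have "ln (sqrt u) \<le> ln (ln (real (nat \<lfloor>root k X\<rfloor>)))"
    using sqrt_u k1 by (intro ln_mono) linarith+
  then show ?thesis
    using u0 by (simp add: ln_sqrt u_def)
qed

lemma sieve_cost_le:
  assumes "0 < k" "exp (4 * real k ^ 2) \<le> X" "real (N0 + 1) ^ k \<le> X" "0 \<le> c"
    and sc: "\<forall>N\<ge>N0. real (sc N) \<le> c * \<bar>real N / ln (ln (real N))\<bar>"
  shows "real (sc (nat \<lfloor>root k X\<rfloor>)) \<le> 2 * c * (root k X / ln (ln X))"
proof -
  define N where "N = nat \<lfloor>root k X\<rfloor>"
  have "real (N0 + 1) \<le> root k X"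
    using assms(1,3) real_root_le_mono[of k "real (N0 + 1) ^ k" X]
    by (simp add: real_root_power_cancel del: of_nat_Suc)
  then have "N0 \<le> N" unfolding N_def by linarith
  have lnln: "ln (ln X) / 2 \<le> ln (ln (real N))"
    unfolding N_def by (rule ln_ln_floor_root_ge[OF assms(1,2)])
  moreover have "0 < ln (ln X)" using ln_bounds_of_exp_le[OF assms(1,2)] by (simp add: ln_gt_zero)
  ultimately have lnlnN: "0 < ln (ln (real N))" by linarith
  have "real N \<le> root k X"
    unfolding N_def using two_le_root[OF assms(1,2)] by simp
  have "real (sc N) \<le> c * \<bar>real N / ln (ln (real N))\<bar>"
    using sc \<open>N0 \<le> N\<close> by blast
  also have "\<dots> = c * (real N / ln (ln (real N)))"
    using lnlnN by simp
  also have "\<dots> \<le> c * (root k X / (ln (ln X) / 2))"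
    using \<open>real N \<le> root k X\<close> lnln \<open>0 < ln (ln X)\<close> assms(4)
    by (intro mult_left_mono frac_le) auto
  finally show ?thesis unfolding N_def by (simp add: mult.commute mult.left_commute)
qed

lemma total_cost_bound:
  assumes "0 < k" "0 \<le> c"
    and sc: "\<forall>N\<ge>N0. real (sc N) \<le> c * \<bar>real N / ln (ln (real N))\<bar>"
    and x: "exp (4 * real k ^ 2) \<le> real_of_int x" "real (N0 + 1) ^ k \<le> real_of_int x"
    and x12: "x1 < x2" "x2 \<le> x"
  shows "real (total_cost sc k x x1 x2)
    \<le> (2 * c + 6 * real k * (real k + 11) + 1)
        * (root k (real_of_int x) / ln (ln (real_of_int x)) + real_of_int (s_rep k x2 - s_rep k x1))"
proof -
  define Y where "Y = root k (real_of_int x) / ln (ln (real_of_int x))"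
  define S where "S = real_of_int (s_rep k x2 - s_rep k x1)"
  define P where "P = real (prime_pi (root k (real_of_int x)))"
  define A where "A = 2 * c + 6 * real k * (real k + 11)"
  have "1 \<le> P" unfolding P_def using prime_pi_ge_1 two_le_root[OF assms(1) x(1)] by simp
  have "real (total_cost sc k x x1 x2) \<le> 2 * c * Y + ((real k + 6) * P + 5) + S"
    using total_cost_le[OF assms(1) x12, of sc] sieve_cost_le[OF assms(1) x assms(2) sc]
    unfolding Y_def S_def P_def by linarith
  also have "(real k + 6) * P + 5 \<le> (real k + 11) * P"
    using \<open>1 \<le> P\<close> by (simp add: algebra_simps)
  also have "\<dots> \<le> (real k + 11) * (6 * real k * Y)"
    unfolding P_def Y_def by (intro mult_left_mono prime_pi_root_le[OF assms(1) x(1)]) auto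
  also have "2 * c * Y + (real k + 11) * (6 * real k * Y) + S = A * Y + S"
    by (simp add: A_def algebra_simps)
  also have "\<dots> \<le> (A + 1) * (Y + S)"
  proof -
    have "0 \<le> Y"
      using two_le_root[OF assms(1) x(1)] ln_bounds_of_exp_le[OF assms(1) x(1)]
      by (simp add: Y_def ln_gt_zero)
    moreover have "0 \<le> A * S"
      unfolding A_def S_def s_rep_diff[OF less_imp_le[OF x12(1)]] using assms(2)
      by (auto intro!: mult_nonneg_nonneg sum_nonneg)
    ultimately show ?thesis by (simp add: algebra_simps)
  qed
  finally show ?thesis unfolding A_def Y_def S_def by simp
qed

theorem theorem3p1:
  fixes k :: nat and sc :: "nat \<Rightarrow> nat"
  assumes k: "k > 1"
    and sieve: "(\<lambda>N. real (sc N)) \<in> O(\<lambda>N. real N / ln (ln (real N)))"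
  shows "(\<forall>x1 x2 :: int. x1 < x2 \<longrightarrow>
            set (fst (algo1 k x1 x2)) =
              {(n, q). x1 \<le> n \<and> n < x2 \<and> (\<exists>i j. (i, j) \<in> reps k n \<and> q = pr i)}
            \<and> distinct (fst (algo1 k x1 x2)))
       \<and> (\<exists>C x0. \<forall>x1 x2 x :: int. x0 \<le> x \<longrightarrow> x1 < x2 \<longrightarrow> x2 \<le> x \<longrightarrow>
            real (total_cost sc k x x1 x2)
              \<le> C * (root k (real_of_int x) / ln (ln (real_of_int x))
                     + real_of_int (s_rep k x2 - s_rep k x1)))"
proof -
  from k have k0: "0 < k" by simp
  obtain c where c: "0 < c"
    and "eventually (\<lambda>N. norm (real (sc N)) \<le> c * norm (real N / ln (ln (real N)))) at_top"
    using sieve by (elim landau_o.bigE)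
  then obtain N0 where sc: "\<forall>N\<ge>N0. real (sc N) \<le> c * \<bar>real N / ln (ln (real N))\<bar>"
    by (auto simp: eventually_at_top_linorder)
  define x0 where "x0 = max \<lceil>exp (4 * real k ^ 2)\<rceil> (int ((N0 + 1) ^ k))"
  have large: "exp (4 * real k ^ 2) \<le> real_of_int x" "real (N0 + 1) ^ k \<le> real_of_int x"
    if "x0 \<le> x" for x :: int
  proof -
    from that have "\<lceil>exp (4 * real k ^ 2)\<rceil> \<le> x" "int ((N0 + 1) ^ k) \<le> x"
      unfolding x0_def by simp_all
    then have "exp (4 * real k ^ 2) \<le> real_of_int x" "real_of_int (int ((N0 + 1) ^ k)) \<le> real_of_int x"
      by (simp_all only: ceiling_le_iff of_int_le_iff)
    then show "exp (4 * real k ^ 2) \<le> real_of_int x" "real (N0 + 1) ^ k \<le> real_of_int x"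
      by simp_all
  qed
  show ?thesis
    using algo1_set[OF k0] algo1_distinct total_cost_bound[OF k0 less_imp_le[OF c] sc] large
    by (intro conjI exI[of _ "2 * c + 6 * real k * (real k + 11) + 1"] exI[of _ x0] allI impI) auto
qed

end
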